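(* Let $a>0$. For $\varphi\in H^1(\mathbb R^3,\mathbb C^2)$ for which $\frac{|\bm\sigma\cdot\nabla\varphi|^2}{1-|\varphi|^2}$ is integrable, define $$\mathcal F(\varphi)=\int_{\mathbb R^3}\frac{|\bm\sigma\cdot\nabla\varphi|^2}{1-|\varphi|^2}\,dx-\frac a2\int_{\mathbb R^3}|\varphi|^4\,dx.$$ In the integrand the convention $0/0=0$ is used, and the denominator $1-|\varphi|^2$ is allowed to be negative. Then $\mathcal F$ is unbounded from below on the set of such $\varphi$ with $\int_{\mathbb R^3}|\varphi|^2\,dx=1$. More precisely, there exist compactly supported such $\varphi_n$ of the form $\varphi_n=(u_n,0)^T$ with $u_n$ real valued and radial, $\int|\varphi_n|^2\,dx=1$, and $\mathcal F(\varphi_n)\to-\infty$.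
   Context: The Pauli matrices are $\sigma_1=\begin{pmatrix}0&1\\1&0\end{pmatrix}$, $\sigma_2=\begin{pmatrix}0&-i\\i&0\end{pmatrix}$ and $\sigma_3=\begin{pmatrix}1&0\\0&-1\end{pmatrix}$. For $\varphi:\mathbb R^3\to\mathbb C^2$ we write $\bm\sigma\cdot\nabla\varphi=\sum_{k=1}^3\sigma_k\partial_k\varphi$. *)

theory Defs
  imports "HOL-Analysis.Analysis"
begin

fun iter_partial :: "3 list \<Rightarrow> (real^3 \<Rightarrow> real) \<Rightarrow> real^3 \<Rightarrow> real" where
  "iter_partial [] f = f"
| "iter_partial (k # ks) f = (\<lambda>x. frechet_derivative (iter_partial ks f) (at x) (axis k 1))"

definition smooth_fun :: "(real^3 \<Rightarrow> real) \<Rightarrow> bool" where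
  "smooth_fun f \<longleftrightarrow> (\<forall>ks x. iter_partial ks f differentiable (at x))"

definition test_function :: "(real^3 \<Rightarrow> real) \<Rightarrow> bool" where
  "test_function \<psi> \<longleftrightarrow> smooth_fun \<psi> \<and> (\<exists>R. \<forall>x. norm x > R \<longrightarrow> \<psi> x = 0)"

definition weak_partial :: "3 \<Rightarrow> (real^3 \<Rightarrow> complex^2) \<Rightarrow> (real^3 \<Rightarrow> complex^2) \<Rightarrow> bool" where
  "weak_partial k f g \<longleftrightarrow>
     (\<forall>\<psi>. test_function \<psi> \<longrightarrow>
        (\<integral>x. frechet_derivative \<psi> (at x) (axis k 1) *\<^sub>R f x \<partial>lborel)
        = - (\<integral>x. \<psi> x *\<^sub>R g x \<partial>lborel))"

definition L2 :: "(real^3 \<Rightarrow> complex^2) \<Rightarrow> bool" where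
  "L2 f \<longleftrightarrow> f \<in> borel_measurable lborel \<and> integrable lborel (\<lambda>x. norm (f x) ^ 2)"

definition H1_with_grad :: "(real^3 \<Rightarrow> complex^2) \<Rightarrow> (3 \<Rightarrow> real^3 \<Rightarrow> complex^2) \<Rightarrow> bool" where
  "H1_with_grad \<phi> D \<longleftrightarrow> L2 \<phi> \<and> (\<forall>k. L2 (D k) \<and> weak_partial k \<phi> (D k))"

definition pauli :: "3 \<Rightarrow> complex^2^2" where
  "pauli k = (if k = 1 then vector [vector [0, 1], vector [1, 0]]
              else if k = 2 then vector [vector [0, - \<i>], vector [\<i>, 0]]
              else vector [vector [1, 0], vector [0, -1]])"

definition sigma_grad :: "(3 \<Rightarrow> real^3 \<Rightarrow> complex^2) \<Rightarrow> real^3 \<Rightarrow> complex^2" where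
  "sigma_grad D x = (\<Sum>k\<in>UNIV. pauli k *v D k x)"

text \<open>Admissible: phi in H^1 and |sigma.grad phi|^2/(1-|phi|^2) integrable (with 0/0 = 0;
  a nonzero numerator over a zero denominator on a set of positive measure is excluded).\<close>
definition admissible :: "(real^3 \<Rightarrow> complex^2) \<Rightarrow> (3 \<Rightarrow> real^3 \<Rightarrow> complex^2) \<Rightarrow> bool" where
  "admissible \<phi> D \<longleftrightarrow> H1_with_grad \<phi> D
     \<and> (AE x in lborel. norm (\<phi> x) = 1 \<longrightarrow> sigma_grad D x = 0)
     \<and> integrable lborel (\<lambda>x. norm (sigma_grad D x) ^ 2 / (1 - norm (\<phi> x) ^ 2))"

definition Ffun :: "real \<Rightarrow> (real^3 \<Rightarrow> complex^2) \<Rightarrow> (3 \<Rightarrow> real^3 \<Rightarrow> complex^2) \<Rightarrow> real" where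
  "Ffun a \<phi> D = (\<integral>x. norm (sigma_grad D x) ^ 2 / (1 - norm (\<phi> x) ^ 2) \<partial>lborel)
                 - a / 2 * (\<integral>x. norm (\<phi> x) ^ 4 \<partial>lborel)"

end

theory Submission
  imports Defs
begin

(* We use spin-up trial states phi_n(x) = W_n(lambda_n^2 |x|^2) e_1,
   where the profile W_n(t) = 1 + (rho_n(t) - 1)^3 is built from the C^1 bumps
   rho_n(t) = 8 (1 - t)_+^2 + n (1/2 - t)_+^2.  The cube makes W_n - 1 vanish to third order
   where |phi_n| = 1, so the kinetic integrand W_n'^2 / (1 - W_n^2) = -9 (rho - 1) rho'^2 / (2 + (rho - 1)^3)
   is bounded (and nonpositive where |phi_n| > 1) uniformly in n, whereas the quartic term of
   the normalised state grows at least linearly in n. *)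

text \<open>General facts about integrals over \<open>\<real>\<^sup>n\<close>.\<close>

lemma integrable_continuous_compact_support:
  fixes f :: "'a::euclidean_space \<Rightarrow> real"
  assumes "continuous_on UNIV f" and "\<And>x. norm x > R \<Longrightarrow> f x = 0"
  shows "integrable lborel f"
proof -
  have "integrable lborel (\<lambda>x. indicator (cball 0 R) x *\<^sub>R f x)"
    by (rule borel_integrable_compact) (auto intro: continuous_on_subset[OF assms(1)])
  moreover have "(\<lambda>x. indicator (cball 0 R) x *\<^sub>R f x) = f"
    using assms(2) by (auto simp: indicator_def fun_eq_iff not_le)
  ultimately show ?thesis by simp
qed

lemma bounded_continuous_compact_support:
  fixes f :: "'a::euclidean_space \<Rightarrow> real"
  assumes "continuous_on UNIV f" and "\<And>x. norm x > R \<Longrightarrow> f x = 0"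
  obtains M where "\<And>x. \<bar>f x\<bar> \<le> M"
proof -
  have "bounded (f ` cball 0 R)"
    by (intro compact_imp_bounded compact_continuous_image continuous_on_subset[OF assms(1)]) auto
  then obtain B where "\<forall>y\<in>f ` cball 0 R. norm y \<le> B"
    unfolding bounded_iff by blast
  then have B: "\<And>x. x \<in> cball 0 R \<Longrightarrow> \<bar>f x\<bar> \<le> B" by auto
  have "\<bar>f x\<bar> \<le> max B 0" for x
    using B[of x] assms(2)[of x] by (cases "norm x \<le> R") auto
  then show ?thesis by (rule that)
qed

lemma has_derivative_zero_outside_support:
  fixes f :: "'a::euclidean_space \<Rightarrow> real"
  assumes "(f has_derivative f') (at x)" and "\<And>y. norm y > R \<Longrightarrow> f y = 0" and "norm x > R"
  shows "f' v = 0"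
proof -
  have "(f has_derivative (\<lambda>_. 0)) (at x)"
    by (rule has_derivative_transform_within_open[OF has_derivative_const, where s="- cball 0 R"])
       (use assms(2,3) in auto)
  then have "f' = (\<lambda>_. 0)" using assms(1) has_derivative_unique by blast
  then show ?thesis by simp
qed

lemma integrable_affine_iff:
  fixes f :: "'a::euclidean_space \<Rightarrow> 'b::{banach, second_countable_topology}"
  assumes "c \<noteq> 0"
  shows "integrable lborel (\<lambda>x. f (t + c *\<^sub>R x)) \<longleftrightarrow> integrable lborel f"
proof -
  have *: "integrable lborel (\<lambda>x. g (s + d *\<^sub>R x))"
    if g: "integrable lborel g" and d: "d \<noteq> 0"
    for g :: "'a \<Rightarrow> 'b" and s d
  proof -
    have [measurable]: "g \<in> borel_measurable borel"
      using g by (simp add: borel_measurable_integrable)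
    have "(\<integral>\<^sup>+x. norm (g x) \<partial>lborel)
        = \<bar>d\<bar> ^ DIM('a) * (\<integral>\<^sup>+x. norm (g (s + d *\<^sub>R x)) \<partial>lborel)"
      by (subst lborel_affine[OF d, of s])
         (simp add: nn_integral_density nn_integral_distr nn_integral_cmult)
    then show ?thesis
      using g d unfolding integrable_iff_bounded by (auto simp: ennreal_mult_less_top)
  qed
  show ?thesis
    using *[of f c t] *[of "\<lambda>x. f (t + c *\<^sub>R x)" "1/c" "- (1/c) *\<^sub>R t"] assms
    by (auto simp: algebra_simps)
qed

lemma integral_affine:
  fixes f :: "'a::euclidean_space \<Rightarrow> 'b::{banach, second_countable_topology}"
  assumes c: "c \<noteq> 0"
  shows "(\<integral>x. f x \<partial>lborel) = \<bar>c\<bar> ^ DIM('a) *\<^sub>R (\<integral>x. f (t + c *\<^sub>R x) \<partial>lborel)"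
proof (cases "integrable lborel f")
  case True
  then show ?thesis
    using c True[THEN borel_measurable_integrable] integrable_affine_iff[OF c, of f t]
    by (subst lborel_affine[OF c, of t]) (simp add: integral_density integral_distr)
next
  case False
  with c show ?thesis by (simp add: integrable_affine_iff not_integrable_integral_eq)
qed

lemma integral_le_cball_bound:
  fixes f :: "'a::euclidean_space \<Rightarrow> real"
  assumes "integrable lborel f" and "\<And>y. f y \<le> c * indicator (cball 0 r) y"
  shows "(\<integral>y. f y \<partial>lborel) \<le> c * measure lborel (cball (0::'a) r)"
proof -
  have "(\<integral>y. f y \<partial>lborel) \<le> (\<integral>y. c * indicator (cball (0::'a) r) y \<partial>lborel)"
    by (intro integral_mono assms integrable_mult_right integrable_real_indicator
        emeasure_compact_finite) auto
  then show ?thesis by simp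
qed

lemma integral_ge_cball_bound:
  fixes f :: "'a::euclidean_space \<Rightarrow> real"
  assumes "integrable lborel f" and "\<And>y. c * indicator (cball 0 r) y \<le> f y"
  shows "c * measure lborel (cball (0::'a) r) \<le> (\<integral>y. f y \<partial>lborel)"
proof -
  have "(\<integral>y. c * indicator (cball (0::'a) r) y \<partial>lborel) \<le> (\<integral>y. f y \<partial>lborel)"
    by (intro integral_mono assms integrable_mult_right integrable_real_indicator
        emeasure_compact_finite) auto
  then show ?thesis by simp
qed

lemma integral_dilation:
  fixes f :: "'a::euclidean_space \<Rightarrow> real"
  assumes "c > 0"
  shows "(\<integral>x. f (c *\<^sub>R x) \<partial>lborel) = (\<integral>y. f y \<partial>lborel) / c ^ DIM('a)"
  using integral_affine[of c f 0] assms by simp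

lemma has_real_derivative_along_line:
  fixes h :: "'a::real_normed_vector \<Rightarrow> real"
  assumes "(h has_derivative h') (at (x + t *\<^sub>R e))"
  shows "((\<lambda>s. h (x + s *\<^sub>R e)) has_real_derivative h' e) (at t)"
proof -
  have "((\<lambda>s. x + s *\<^sub>R e) has_derivative (\<lambda>s. s *\<^sub>R e)) (at t)"
    by (auto intro!: derivative_eq_intros)
  then have "((\<lambda>s. h (x + s *\<^sub>R e)) has_derivative (\<lambda>s. h' (s *\<^sub>R e))) (at t)"
    using has_derivative_compose[of "\<lambda>s. x + s *\<^sub>R e" _ t UNIV h h'] assms by simp
  then show ?thesis
    using linear_scale[OF has_derivative_linear[OF assms]]
    by (simp add: has_field_derivative_def mult_commute_abs)
qed

lemma difference_quotient_tendsto: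
  fixes h :: "'a::real_normed_vector \<Rightarrow> real"
  assumes "(h has_derivative h') (at x)"
  shows "((\<lambda>T. T * (h (x + (1/T) *\<^sub>R e) - h x)) \<longlongrightarrow> h' e) at_top"
proof -
  have "((\<lambda>t. (h (x + t *\<^sub>R e) - h x) / t) \<longlongrightarrow> h' e) (at 0)"
    using has_real_derivative_along_line[of h h' x 0 e] assms by (simp add: DERIV_def)
  moreover have "filterlim (\<lambda>T::real. 1/T) (at 0) at_top"
    unfolding filterlim_at
    using tendsto_inverse_0_at_top[OF filterlim_ident]
    by (auto simp: inverse_eq_divide eventually_at_top_linorder intro: exI[of _ 1])
  ultimately have "((\<lambda>T. (h (x + (1/T) *\<^sub>R e) - h x) / (1/T)) \<longlongrightarrow> h' e) at_top"
    by (rule filterlim_compose)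
  then show ?thesis by (simp add: mult.commute)
qed

text \<open>By the mean value theorem, these difference quotients are dominated by a bound on the
  directional derivative, times the indicator of a fixed ball.\<close>

lemma difference_quotient_bound:
  fixes h :: "'a::real_normed_vector \<Rightarrow> real"
  assumes deriv: "\<And>x. (h has_derivative h' x) (at x)"
    and bound: "\<And>x. \<bar>h' x e\<bar> \<le> M"
    and supp: "\<And>x. norm x > R \<Longrightarrow> h x = 0"
    and T: "T \<ge> 1"
  shows "\<bar>T * (h (x + (1/T) *\<^sub>R e) - h x)\<bar> \<le> M * indicator (cball 0 (\<bar>R\<bar> + norm e)) x"
proof (cases "x \<in> cball 0 (\<bar>R\<bar> + norm e)")
  case True
  have "0 < 1/T" using T by simp
  from MVT2[OF this, of "\<lambda>t. h (x + t *\<^sub>R e)" "\<lambda>t. h' (x + t *\<^sub>R e) e"]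
  obtain z where "h (x + (1/T) *\<^sub>R e) - h x = (1/T) * h' (x + z *\<^sub>R e) e"
    using has_real_derivative_along_line[OF deriv] by auto
  then show ?thesis using True T bound[of "x + z *\<^sub>R e"] by simp
next
  case False
  have "norm x - norm e \<le> norm (x + (1/T) *\<^sub>R e)"
    using norm_triangle_ineq2[of x "- ((1/T) *\<^sub>R e)"] T
      mult_left_le_one_le[of "norm e" "1/T"] by simp
  moreover have "norm x > \<bar>R\<bar> + norm e" using False by simp
  ultimately have "R < norm (x + (1/T) *\<^sub>R e)" "R < norm x"
    using norm_ge_zero[of e] abs_ge_self[of R] by linarith+
  then have "h (x + (1/T) *\<^sub>R e) = 0" "h x = 0"
    by (auto intro!: supp)
  then show ?thesis using False by simp
qed

text \<open>The difference
  quotients have integral zero by translation invariance of Lebesgue measure, and they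
  converge dominatedly to the directional derivative.\<close>

lemma integral_directional_derivative_eq_0:
  fixes h :: "'a::euclidean_space \<Rightarrow> real"
  assumes deriv: "\<And>x. (h has_derivative h' x) (at x)"
    and cont: "continuous_on UNIV (\<lambda>x. h' x e)"
    and supp: "\<And>x. norm x > R \<Longrightarrow> h x = 0"
  shows "(\<integral>x. h' x e \<partial>lborel) = 0"
proof -
  define q where "q T x = T * (h (x + (1/T) *\<^sub>R e) - h x)" for T x
  have h_cont: "continuous_on UNIV h"
    using deriv by (meson continuous_on_eq_continuous_within has_derivative_continuous)
  have h_int: "integrable lborel h"
    by (rule integrable_continuous_compact_support[OF h_cont supp])
  have [measurable]: "h \<in> borel_measurable borel" "(\<lambda>x. h' x e) \<in> borel_measurable borel"
    using h_cont cont by (auto intro: borel_measurable_continuous_onI)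
  obtain M where M: "\<And>x. \<bar>h' x e\<bar> \<le> M"
    using bounded_continuous_compact_support[OF cont]
      has_derivative_zero_outside_support[OF deriv supp] by blast
  have shift_int: "integrable lborel (\<lambda>x. h (x + v))" for v
    using integrable_affine_iff[of 1 h v] h_int by (simp add: add.commute)
  have q_int_0: "(\<integral>x. q T x \<partial>lborel) = 0" for T
  proof -
    have "(\<integral>x. h (x + (1/T) *\<^sub>R e) \<partial>lborel) = (\<integral>x. h x \<partial>lborel)"
      using integral_affine[of 1 h "(1/T) *\<^sub>R e"] by (simp add: add.commute)
    then show ?thesis
      unfolding q_def using shift_int h_int by simp
  qed
  have "((\<lambda>T. \<integral>x. q T x \<partial>lborel) \<longlongrightarrow> (\<integral>x. h' x e \<partial>lborel)) at_top"
  proof (rule integral_dominated_convergence_at_top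
      [where w="\<lambda>x. M * indicator (cball 0 (\<bar>R\<bar> + norm e)) x"])
    show "integrable lborel (\<lambda>x. M * indicator (cball 0 (\<bar>R\<bar> + norm e)) x :: real)"
      by (intro integrable_mult_right integrable_real_indicator emeasure_compact_finite) auto
    show "AE x in lborel. ((\<lambda>T. q T x) \<longlongrightarrow> h' x e) at_top"
      unfolding q_def using difference_quotient_tendsto[OF deriv] by simp
    show "\<forall>\<^sub>F T in at_top. AE x in lborel. norm (q T x) \<le> M * indicator (cball 0 (\<bar>R\<bar> + norm e)) x"
      unfolding q_def using difference_quotient_bound[OF deriv M, of R] supp
      by (auto simp: eventually_at_top_linorder)
    show "q T \<in> borel_measurable lborel" for T
      unfolding q_def[abs_def] using shift_int[THEN borel_measurable_integrable] by simp
  qed simp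
  then show ?thesis using q_int_0 by (simp add: tendsto_const_iff)
qed

text \<open>Integration by parts against a compactly supported \<open>C\<^sup>1\<close> function \<open>\<psi>\<close>, obtained
  by applying the previous lemma to the product \<open>\<psi> u\<close>.\<close>

lemma integration_by_parts_compact_support:
  fixes \<psi> u :: "'a::euclidean_space \<Rightarrow> real"
  assumes \<psi>_deriv: "\<And>x. (\<psi> has_derivative \<psi>' x) (at x)"
    and \<psi>'_cont: "continuous_on UNIV (\<lambda>x. \<psi>' x e)"
    and \<psi>_supp: "\<And>x. norm x > R \<Longrightarrow> \<psi> x = 0"
    and u_deriv: "\<And>x. (u has_derivative u' x) (at x)"
    and u'_cont: "continuous_on UNIV (\<lambda>x. u' x e)"
  shows "integrable lborel (\<lambda>x. \<psi>' x e * u x)"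
    and "integrable lborel (\<lambda>x. \<psi> x * u' x e)"
    and "(\<integral>x. \<psi>' x e * u x \<partial>lborel) = - (\<integral>x. \<psi> x * u' x e \<partial>lborel)"
proof -
  have \<psi>_cont: "continuous_on UNIV \<psi>" and u_cont: "continuous_on UNIV u"
    using \<psi>_deriv u_deriv
    by (meson continuous_on_eq_continuous_within has_derivative_continuous)+
  have \<psi>'_supp: "\<And>x. norm x > R \<Longrightarrow> \<psi>' x e = 0"
    by (rule has_derivative_zero_outside_support[OF \<psi>_deriv \<psi>_supp])
  show int1: "integrable lborel (\<lambda>x. \<psi>' x e * u x)"
    by (rule integrable_continuous_compact_support[of _ R])
       (auto intro!: continuous_intros \<psi>'_cont u_cont simp: \<psi>'_supp)
  show int2: "integrable lborel (\<lambda>x. \<psi> x * u' x e)"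
    by (rule integrable_continuous_compact_support[of _ R])
       (auto intro!: continuous_intros \<psi>_cont u'_cont simp: \<psi>_supp)
  have "((\<lambda>x. \<psi> x * u x) has_derivative (\<lambda>v. \<psi> x * u' x v + \<psi>' x v * u x)) (at x)" for x
    by (rule has_derivative_mult[OF \<psi>_deriv u_deriv])
  then have "(\<integral>x. \<psi> x * u' x e + \<psi>' x e * u x \<partial>lborel) = 0"
    by (rule integral_directional_derivative_eq_0[where R=R])
       (auto intro!: continuous_intros \<psi>_cont \<psi>'_cont u_cont u'_cont simp: \<psi>_supp)
  then show "(\<integral>x. \<psi>' x e * u x \<partial>lborel) = - (\<integral>x. \<psi> x * u' x e \<partial>lborel)"
    using int1 int2 by simp
qed

text \<open>The only properties of test functions that are needed: they are compactly supported
  and \<open>C\<^sup>1\<close>.\<close>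

lemma test_function_C1:
  assumes "test_function \<psi>"
  shows "(\<psi> has_derivative frechet_derivative \<psi> (at x)) (at x)"
    and "continuous_on UNIV (\<lambda>x. frechet_derivative \<psi> (at x) (axis k 1))"
    and "\<exists>R. \<forall>x. norm x > R \<longrightarrow> \<psi> x = 0"
proof -
  have smooth: "\<And>ks x. iter_partial ks \<psi> differentiable (at x)"
    using assms unfolding test_function_def smooth_fun_def by auto
  show "(\<psi> has_derivative frechet_derivative \<psi> (at x)) (at x)"
    using smooth[of "[]"] by (simp add: frechet_derivative_works)
  have "(\<lambda>x. frechet_derivative \<psi> (at x) (axis k 1)) differentiable (at x)" for x
    using smooth[of "[k]" x] by simp
  then show "continuous_on UNIV (\<lambda>x. frechet_derivative \<psi> (at x) (axis k 1))"
    by (simp add: differentiable_imp_continuous_within continuous_on_eq_continuous_within)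
  show "\<exists>R. \<forall>x. norm x > R \<longrightarrow> \<psi> x = 0"
    using assms unfolding test_function_def by auto
qed

definition spin_up :: "complex^2" where "spin_up = vector [1, 0]"

lemma norm_spin_up [simp]: "norm spin_up = 1"
  unfolding spin_up_def norm_vec_def L2_set_def by (simp add: sum_2)

lemma scaleR_spin_up: "r *\<^sub>R spin_up = vector [complex_of_real r, 0]"
  unfolding spin_up_def by (simp add: vec_eq_iff forall_2) (simp add: scaleR_conv_of_real)

lemma norm_sigma_grad_spin_up:
  "norm (sigma_grad (\<lambda>k x. g k x *\<^sub>R spin_up) x) ^ 2 = (g 1 x)^2 + (g 2 x)^2 + (g 3 x)^2"
proof -
  have "sigma_grad (\<lambda>k x. g k x *\<^sub>R spin_up) x
      = vector [complex_of_real (g 3 x), complex_of_real (g 1 x) + \<i> * complex_of_real (g 2 x)]"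
    unfolding sigma_grad_def pauli_def spin_up_def
    by (simp add: sum_3 vec_eq_iff forall_2 matrix_vector_mult_def sum_2)
       (simp add: scaleR_conv_of_real)
  then show ?thesis
    unfolding norm_vec_def L2_set_def by (simp add: sum_2 cmod_power2 sum_nonneg)
qed

lemma weak_partial_spin_up:
  fixes u :: "real^3 \<Rightarrow> real"
  assumes u_deriv: "\<And>x. (u has_derivative u' x) (at x)"
    and u'_cont: "continuous_on UNIV (\<lambda>x. u' x (axis k 1))"
  shows "weak_partial k (\<lambda>x. u x *\<^sub>R spin_up) (\<lambda>x. u' x (axis k 1) *\<^sub>R spin_up)"
  unfolding weak_partial_def
proof (intro allI impI)
  fix \<psi> assume "test_function \<psi>"
  then obtain R where "\<forall>x. norm x > R \<longrightarrow> \<psi> x = 0"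
    using test_function_C1(3) by blast
  note ibp = integration_by_parts_compact_support
    [OF test_function_C1(1,2)[OF \<open>test_function \<psi>\<close>] _ u_deriv u'_cont, of R]
  have "(\<integral>x. frechet_derivative \<psi> (at x) (axis k 1) *\<^sub>R u x *\<^sub>R spin_up \<partial>lborel)
      = (\<integral>x. (frechet_derivative \<psi> (at x) (axis k 1) * u x) *\<^sub>R spin_up \<partial>lborel)"
    by simp
  also have "\<dots> = (\<integral>x. frechet_derivative \<psi> (at x) (axis k 1) * u x \<partial>lborel) *\<^sub>R spin_up"
    using ibp(1) \<open>\<forall>x. _\<close> by (intro integral_scaleR_left) blast
  also have "\<dots> = - ((\<integral>x. \<psi> x * u' x (axis k 1) \<partial>lborel) *\<^sub>R spin_up)"
    using ibp(3) \<open>\<forall>x. _\<close> by simp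
  also have "(\<integral>x. \<psi> x * u' x (axis k 1) \<partial>lborel) *\<^sub>R spin_up
      = (\<integral>x. (\<psi> x * u' x (axis k 1)) *\<^sub>R spin_up \<partial>lborel)"
    using ibp(2) \<open>\<forall>x. _\<close> by (intro integral_scaleR_left[symmetric]) blast
  also have "\<dots> = (\<integral>x. \<psi> x *\<^sub>R u' x (axis k 1) *\<^sub>R spin_up \<partial>lborel)"
    by simp
  finally show "(\<integral>x. frechet_derivative \<psi> (at x) (axis k 1) *\<^sub>R u x *\<^sub>R spin_up \<partial>lborel)
      = - (\<integral>x. \<psi> x *\<^sub>R u' x (axis k 1) *\<^sub>R spin_up \<partial>lborel)" .
qed

text \<open>The cancellation that makes the kinetic term finite: \<open>(W')\<^sup>2 / (1 - W\<^sup>2)\<close> for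
  \<open>W = 1 + a\<^sup>3\<close>, \<open>W' = 3 a\<^sup>2 p\<close> (with the convention \<open>x / 0 = 0\<close>).\<close>

lemma cube_profile_ratio:
  fixes a p :: real
  shows "(3 * a^2 * p)^2 / (1 - (1 + a^3)^2) = - 9 * a * p^2 / (2 + a^3)"
proof (cases "a = 0")
  case False
  have "(3 * a^2 * p)^2 / (1 - (1 + a^3)^2) = (a^3 * (9 * a * p^2)) / (a^3 * (- (2 + a^3)))"
    by (simp add: power2_eq_square power_numeral_reduce algebra_simps)
  also have "\<dots> = - 9 * a * p^2 / (2 + a^3)"
  proof -
    have "a^3 \<noteq> 0" using False by simp
    then have "(a^3 * (9 * a * p^2)) / (a^3 * (- (2 + a^3))) = (9 * a * p^2) / (- (2 + a^3))"
      by (rule mult_divide_mult_cancel_left)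
    then show ?thesis by (simp only: divide_minus_right)
  qed
  finally show ?thesis .
qed simp

text \<open>The denominator \<open>2 + a\<^sup>3\<close> stays away from zero since \<open>\<rho> \<ge> 0\<close>.\<close>

lemma cube_denominator_ge_1:
  fixes a :: real
  assumes "a \<ge> -1"
  shows "2 + a^3 \<ge> 1"
  using power_mono_odd[of 3 "-1" a] assms by simp

lemma divide_le_self_ge_1: "(x::real) \<ge> 0 \<Longrightarrow> d \<ge> 1 \<Longrightarrow> x / d \<le> x"
  by (simp add: divide_le_eq mult_le_cancel_left1 order_trans)

lemma cube_ratio_le:
  fixes a p :: real
  assumes "a \<ge> -1"
  shows "- 9 * a * p^2 / (2 + a^3) \<le> 9 * p^2"
    and "a \<ge> 0 \<Longrightarrow> - 9 * a * p^2 / (2 + a^3) \<le> 0"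
proof -
  have d: "2 + a^3 \<ge> 1" by (rule cube_denominator_ge_1[OF assms])
  show nonpos: "- 9 * a * p^2 / (2 + a^3) \<le> 0" if "a \<ge> 0"
  proof (rule divide_nonpos_pos)
    show "- 9 * a * p^2 \<le> 0" using that by (simp add: mult_nonneg_nonneg)
    show "0 < 2 + a^3" using d by linarith
  qed
  show "- 9 * a * p^2 / (2 + a^3) \<le> 9 * p^2"
  proof (cases "a \<ge> 0")
    case True
    then show ?thesis using nonpos zero_le_power2[of p] by linarith
  next
    case False
    have num: "0 \<le> - 9 * a * p^2" using False by (simp add: mult_nonpos_nonneg)
    have "- 9 * a * p^2 / (2 + a^3) \<le> - 9 * a * p^2"
      using num d by (rule divide_le_self_ge_1)
    also have "\<dots> = (-a) * (9 * p^2)" by simp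
    also have "\<dots> \<le> 1 * (9 * p^2)" using assms by (intro mult_right_mono) auto
    finally show ?thesis by simp
  qed
qed

text \<open>The radial profile, as a function of \<open>t = |y|\<^sup>2\<close>.\<close>

definition pos_sq :: "real \<Rightarrow> real" where "pos_sq y = (max 0 y)^2"

lemma pos_sq_deriv: "(pos_sq has_real_derivative (2 * max 0 y)) (at y)"
proof -
  consider "y > 0" | "y < 0" | "y = 0" by linarith
  then show ?thesis
  proof cases
    case 1
    have "((\<lambda>y. y^2) has_real_derivative 2 * max 0 y) (at y)"
      using 1 by (auto intro!: derivative_eq_intros)
    then show ?thesis
      by (rule has_field_derivative_transform_within_open[where S="{0<..}"])
         (use 1 in \<open>auto simp: pos_sq_def\<close>)
  next
    case 2
    have "((\<lambda>y. 0) has_real_derivative 2 * max 0 y) (at y)" using 2 by simp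
    then show ?thesis
      by (rule has_field_derivative_transform_within_open[where S="{..<0}"])
         (use 2 in \<open>auto simp: pos_sq_def\<close>)
  next
    case 3
    have "((\<lambda>h. (pos_sq (0 + h) - pos_sq 0) / h) \<longlongrightarrow> 0) (at 0)"
    proof (rule Lim_null_comparison[where g="\<lambda>h. \<bar>h\<bar>"])
      show "\<forall>\<^sub>F h in at 0. norm ((pos_sq (0 + h) - pos_sq 0) / h) \<le> \<bar>h\<bar>"
        by (auto simp: pos_sq_def power2_eq_square abs_mult max_def)
      show "((\<lambda>h. \<bar>h\<bar>) \<longlongrightarrow> (0::real)) (at 0)"
        by (auto intro!: tendsto_eq_intros)
    qed
    then show ?thesis using 3 unfolding DERIV_def by simp
  qed
qed

lemma pos_sq_nonneg: "pos_sq y \<ge> 0"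
  by (simp add: pos_sq_def)

definition rho :: "nat \<Rightarrow> real \<Rightarrow> real" where
  "rho n t = 8 * pos_sq (1 - t) + real n * pos_sq (1/2 - t)"

definition rho' :: "nat \<Rightarrow> real \<Rightarrow> real" where
  "rho' n t = - 16 * max 0 (1 - t) - 2 * real n * max 0 (1/2 - t)"

lemma rho_deriv: "(rho n has_real_derivative rho' n t) (at t)"
  unfolding rho_def[abs_def] rho'_def
  by (auto intro!: derivative_eq_intros DERIV_chain2[OF pos_sq_deriv])

lemma rho_nonneg: "rho n t \<ge> 0"
  by (simp add: rho_def pos_sq_nonneg)

lemma rho_vanish: "t \<ge> 1 \<Longrightarrow> rho n t = 0 \<and> rho' n t = 0"
  by (simp add: rho_def rho'_def pos_sq_def max_def)

lemma continuous_rho: "continuous_on UNIV (rho n)" "continuous_on UNIV (rho' n)"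
  unfolding rho_def[abs_def] rho'_def[abs_def] pos_sq_def
  by (auto intro!: continuous_intros)

definition prof :: "nat \<Rightarrow> real \<Rightarrow> real" where
  "prof n t = 1 + (rho n t - 1)^3"

definition prof' :: "nat \<Rightarrow> real \<Rightarrow> real" where
  "prof' n t = 3 * (rho n t - 1)^2 * rho' n t"

definition ratio :: "nat \<Rightarrow> real \<Rightarrow> real" where
  "ratio n t = - 9 * (rho n t - 1) * (rho' n t)^2 / (2 + (rho n t - 1)^3)"

lemma prof_deriv: "(prof n has_real_derivative prof' n t) (at t)"
  unfolding prof_def[abs_def] prof'_def
  by (auto intro!: derivative_eq_intros rho_deriv)

lemma continuous_prof: "continuous_on UNIV (prof n)" "continuous_on UNIV (prof' n)"
  unfolding prof_def[abs_def] prof'_def[abs_def]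
  by (auto intro!: continuous_intros continuous_rho)

lemma prof_vanish: "t \<ge> 1 \<Longrightarrow> prof n t = 0 \<and> prof' n t = 0"
  by (simp add: prof_def prof'_def rho_vanish)

lemma ratio_vanish: "t \<ge> 1 \<Longrightarrow> ratio n t = 0"
  by (simp add: ratio_def rho_vanish)

lemma prof_ratio_eq: "(prof' n t)^2 / (1 - (prof n t)^2) = ratio n t"
  unfolding prof_def prof'_def ratio_def by (rule cube_profile_ratio)

lemma continuous_ratio: "continuous_on UNIV (ratio n)"
  unfolding ratio_def[abs_def]
proof (intro continuous_intros continuous_rho ballI)
  fix t
  show "2 + (rho n t - 1)^3 \<noteq> 0"
    using cube_denominator_ge_1[of "rho n t - 1"] rho_nonneg[of n t] by simp
qed

text \<open>The kinetic density \<open>4 t \<cdot> ratio n t\<close> (the integrand in the variable \<open>t = |y|\<^sup>2\<close>)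
  is bounded uniformly in \<open>n\<close>: on \<open>t < 1/2\<close> the profile exceeds \<open>1\<close> and the ratio is
  nonpositive, on \<open>1/2 \<le> t \<le> 1\<close> only the fixed bump \<open>8 (1 - t)\<^sup>2\<close> is active.\<close>

lemma kinetic_density_bound:
  assumes t: "t \<ge> 0"
  shows "4 * t * ratio n t \<le> 2304 * (if t \<le> 1 then 1 else 0)"
proof -
  have a: "rho n t - 1 \<ge> -1" using rho_nonneg[of n t] by simp
  note le = cube_ratio_le[OF a, of "rho' n t", folded ratio_def]
  consider "t > 1" | "t < 1/2" | "1/2 \<le> t" "t \<le> 1" by linarith
  then show ?thesis
  proof cases
    case 1
    then show ?thesis by (simp add: ratio_vanish)
  next
    case 2
    have "pos_sq (1 - t) \<ge> 1/4"
      using 2 t mult_mono[of "1/2" "1 - t" "1/2" "1 - t"]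
      by (simp add: pos_sq_def max_def power2_eq_square)
    then have "rho n t \<ge> 2"
      unfolding rho_def using pos_sq_nonneg[of "1/2 - t"]
        mult_nonneg_nonneg[of "real n" "pos_sq (1/2 - t)"] by linarith
    then have "ratio n t \<le> 0" using le(2) by simp
    then have "t * ratio n t \<le> 0" using t by (simp add: mult_nonneg_nonpos)
    then show ?thesis by simp
  next
    case 3
    have "rho' n t = - 16 * (1 - t)" using 3 by (simp add: rho'_def max_def)
    then have "\<bar>rho' n t\<bar> \<le> 8" using 3 by simp
    then have "\<bar>rho' n t\<bar>^2 \<le> 8^2" by (intro power_mono) auto
    then have "(rho' n t)^2 \<le> 8^2" by simp
    then have "ratio n t \<le> 576" using le(1) by simp
    show ?thesis
    proof (cases "ratio n t \<ge> 0")
      case True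
      then have "4 * t * ratio n t \<le> 4 * 1 * 576"
        using 3 \<open>ratio n t \<le> 576\<close> by (intro mult_mono) auto
      then show ?thesis using 3 by simp
    next
      case False
      then have "t * ratio n t \<le> 0" using t by (simp add: mult_nonneg_nonpos)
      then show ?thesis by simp
    qed
  qed
qed

lemma prof_bounds:
  assumes t: "t \<ge> 0"
  shows "0 \<le> prof n t" and "prof n t \<le> (8 + real n)^3"
proof -
  define a where "a = rho n t - 1"
  have "a \<ge> -1" using rho_nonneg[of n t] by (simp add: a_def)
  then show "0 \<le> prof n t"
    unfolding prof_def a_def[symmetric] using power_mono_odd[of 3 "-1" a] by simp
  have "pos_sq (1 - t) \<le> 1" "pos_sq (1/2 - t) \<le> 1"
    using t by (simp_all add: pos_sq_def max_def power_le_one)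
  then have "real n * pos_sq (1/2 - t) \<le> real n"
    using mult_left_mono[of "pos_sq (1/2 - t)" 1 "real n"] by simp
  then have "a \<le> 7 + real n"
    unfolding a_def rho_def using \<open>pos_sq (1 - t) \<le> 1\<close> by simp
  then have "a^3 \<le> (7 + real n)^3" by (intro power_mono_odd) auto
  moreover have "(7 + real n)^3 + 1 \<le> (8 + real n)^3"
    by (simp add: power3_eq_cube algebra_simps)
  ultimately show "prof n t \<le> (8 + real n)^3" unfolding prof_def a_def[symmetric] by linarith
qed

lemma prof_lower:
  assumes t: "0 \<le> t" "t \<le> 1/4"
  shows "prof n t \<ge> ((32 + real n)/32)^3"
proof -
  have "pos_sq (1 - t) \<ge> 9/16"
    using t mult_mono[of "3/4" "1 - t" "3/4" "1 - t"]
    by (simp add: pos_sq_def max_def power2_eq_square)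
  moreover have "pos_sq (1/2 - t) \<ge> 1/16"
    using t mult_mono[of "1/4" "1/2 - t" "1/4" "1/2 - t"]
    by (simp add: pos_sq_def max_def power2_eq_square)
  then have "real n * pos_sq (1/2 - t) \<ge> real n * (1/16)" by (intro mult_left_mono) auto
  ultimately have "rho n t - 1 \<ge> (32 + real n)/32" unfolding rho_def by simp
  then have "(rho n t - 1)^3 \<ge> ((32 + real n)/32)^3" by (intro power_mono) auto
  then show ?thesis unfolding prof_def by linarith
qed

lemma prof'_eq_0_if_norm_1:
  assumes "t \<ge> 0" and "\<bar>prof n t\<bar> = 1"
  shows "prof' n t = 0"
proof -
  have "prof n t = 1" using prof_bounds(1)[OF assms(1), of n] assms(2) by simp
  then show ?thesis by (simp add: prof_def prof'_def)
qed

text \<open>The densities of the unscaled trial state \<open>y \<mapsto> prof n |y|\<^sup>2\<close>, all supported in the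
  closed unit ball: the kinetic density, and the densities of \<open>|\<phi>|\<^sup>2\<close> and \<open>|\<phi>|\<^sup>4\<close>.\<close>

definition kin_dens :: "nat \<Rightarrow> real^3 \<Rightarrow> real" where
  "kin_dens n y = 4 * (y \<bullet> y) * ratio n (y \<bullet> y)"

definition mass_dens :: "nat \<Rightarrow> real^3 \<Rightarrow> real" where
  "mass_dens n y = (prof n (y \<bullet> y))^2"

definition quart_dens :: "nat \<Rightarrow> real^3 \<Rightarrow> real" where
  "quart_dens n y = (prof n (y \<bullet> y))^4"

definition vol_unit :: real where "vol_unit = measure lborel (cball (0::real^3) 1)"
definition vol_half :: real where "vol_half = measure lborel (cball (0::real^3) (1/2))"

lemma vol_half_pos: "vol_half > 0"
proof -
  have "0 < measure lborel (ball (0::real^3) (1/2))"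
    using content_ball_pos[of "1/2" "0::real^3"] by simp
  also have "\<dots> \<le> vol_half"
    unfolding vol_half_def by (intro measure_mono_fmeasurable fmeasurable_compact) auto
  finally show ?thesis .
qed

lemma vol_half_le_vol_unit: "vol_half \<le> vol_unit"
  unfolding vol_half_def vol_unit_def
  by (intro measure_mono_fmeasurable fmeasurable_compact) auto

lemma inner_self_le_iff: "r \<ge> 0 \<Longrightarrow> (y::real^3) \<bullet> y \<le> r^2 \<longleftrightarrow> norm y \<le> r"
  by (metis norm_ge_zero power2_norm_eq_inner power2_le_iff_abs_le abs_of_nonneg)

lemma densities_vanish:
  assumes "norm y > 1"
  shows "kin_dens n y = 0" and "mass_dens n y = 0" and "quart_dens n y = 0"
proof -
  have "y \<bullet> y \<ge> 1" using assms inner_self_le_iff[of 1 y] by simp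
  then show "kin_dens n y = 0" "mass_dens n y = 0" "quart_dens n y = 0"
    by (simp_all add: kin_dens_def mass_dens_def quart_dens_def ratio_vanish prof_vanish)
qed

lemma densities_integrable:
  "integrable lborel (kin_dens n)" "integrable lborel (mass_dens n)"
  "integrable lborel (quart_dens n)"
  using densities_vanish
  by (auto intro!: integrable_continuous_compact_support[of _ 1] continuous_intros
      continuous_on_compose2[OF continuous_ratio] continuous_on_compose2[OF continuous_prof(1)]
      simp: kin_dens_def[abs_def] mass_dens_def[abs_def] quart_dens_def[abs_def])

lemma kin_integral_le: "(\<integral>y. kin_dens n y \<partial>lborel) \<le> 2304 * vol_unit"
  unfolding vol_unit_def
proof (rule integral_le_cball_bound[OF densities_integrable(1)])
  fix y :: "real^3"
  show "kin_dens n y \<le> 2304 * indicator (cball 0 1) y"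
    using kinetic_density_bound[of "y \<bullet> y" n] inner_self_le_iff[of 1 y]
    by (auto simp: kin_dens_def indicator_def split: if_splits)
qed

lemma mass_integral_bounds:
  "vol_half \<le> (\<integral>y. mass_dens n y \<partial>lborel)"
  "(\<integral>y. mass_dens n y \<partial>lborel) \<le> (8 + real n)^6 * vol_unit"
proof -
  show "vol_half \<le> (\<integral>y. mass_dens n y \<partial>lborel)"
    unfolding vol_half_def
  proof (rule integral_ge_cball_bound[OF densities_integrable(2), of 1, simplified])
    fix y :: "real^3"
    have "norm y \<le> 1/2 \<Longrightarrow> ((32 + real n)/32)^3 \<le> prof n (y \<bullet> y)"
      using prof_lower[of "y \<bullet> y" n] inner_self_le_iff[of "1/2" y] by (simp add: power2_eq_square)
    moreover have "1 \<le> ((32 + real n)/32)^3" by simp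
    ultimately have "norm y \<le> 1/2 \<Longrightarrow> 1 \<le> prof n (y \<bullet> y)" by (meson order_trans)
    then show "indicator (cball 0 (1/2)) y \<le> mass_dens n y"
      by (auto simp: mass_dens_def indicator_def one_le_power)
  qed
  show "(\<integral>y. mass_dens n y \<partial>lborel) \<le> (8 + real n)^6 * vol_unit"
    unfolding vol_unit_def
  proof (rule integral_le_cball_bound[OF densities_integrable(2)])
    fix y :: "real^3"
    have "(prof n (y \<bullet> y))^2 \<le> ((8 + real n)^3)^2"
      using prof_bounds[of "y \<bullet> y" n] by (intro power_mono) auto
    then show "mass_dens n y \<le> (8 + real n)^6 * indicator (cball 0 1) y"
      using densities_vanish(2)[of y n]
      by (cases "norm y \<le> 1") (auto simp: mass_dens_def power_mult[symmetric])
  qed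
qed

lemma quart_integral_lower:
  "((32 + real n)/32)^12 * vol_half \<le> (\<integral>y. quart_dens n y \<partial>lborel)"
  unfolding vol_half_def
proof (rule integral_ge_cball_bound[OF densities_integrable(3)])
  fix y :: "real^3"
  have "norm y \<le> 1/2 \<Longrightarrow> (((32 + real n)/32)^3)^4 \<le> (prof n (y \<bullet> y))^4"
    using prof_lower[of "y \<bullet> y" n] inner_self_le_iff[of "1/2" y]
    by (intro power_mono) (auto simp: power2_eq_square)
  then show "((32 + real n)/32)^12 * indicator (cball 0 (1/2)) y \<le> quart_dens n y"
    by (auto simp: quart_dens_def indicator_def power_mult[symmetric])
qed

text \<open>Rescaling by \<open>trial_scale n\<close> normalises the mass: \<open>\<integral> |\<phi>|\<^sup>2 = \<integral> mass_dens n / trial_scale n\<^sup>3 = 1\<close>.\<close>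

definition trial_scale :: "nat \<Rightarrow> real" where
  "trial_scale n = root 3 (\<integral>y. mass_dens n y \<partial>lborel)"

lemma trial_scale_pos: "trial_scale n > 0"
  and trial_scale_cube: "trial_scale n ^ 3 = (\<integral>y. mass_dens n y \<partial>lborel)"
  and trial_scale_ge: "root 3 vol_half \<le> trial_scale n"
proof -
  have pos: "(\<integral>y. mass_dens n y \<partial>lborel) > 0"
    using mass_integral_bounds(1)[of n] vol_half_pos by linarith
  then show "trial_scale n > 0" "trial_scale n ^ 3 = (\<integral>y. mass_dens n y \<partial>lborel)"
    unfolding trial_scale_def by simp_all
  show "root 3 vol_half \<le> trial_scale n"
    unfolding trial_scale_def using mass_integral_bounds(1)[of n] by simp
qed

definition trial_amp :: "nat \<Rightarrow> real^3 \<Rightarrow> real" where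
  "trial_amp n x = prof n (trial_scale n ^ 2 * (x \<bullet> x))"

definition trial_amp' :: "nat \<Rightarrow> real^3 \<Rightarrow> real^3 \<Rightarrow> real" where
  "trial_amp' n x v = prof' n (trial_scale n ^ 2 * (x \<bullet> x)) * (trial_scale n ^ 2 * (2 * (x \<bullet> v)))"

lemma trial_amp_deriv: "(trial_amp n has_derivative trial_amp' n x) (at x)"
proof -
  have "((\<lambda>x. prof n (trial_scale n ^ 2 * (x \<bullet> x))) has_derivative
      (\<lambda>v. (trial_scale n ^ 2 * (x \<bullet> v + v \<bullet> x)) * prof' n (trial_scale n ^ 2 * (x \<bullet> x)))) (at x)"
    by (rule DERIV_compose_FDERIV[OF prof_deriv]) (auto intro!: derivative_eq_intros)
  then show ?thesis
    unfolding trial_amp_def[abs_def] trial_amp'_def[abs_def]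
    by (rule has_derivative_eq_rhs) (auto simp: fun_eq_iff inner_commute algebra_simps)
qed

lemma trial_amp'_axis:
  "trial_amp' n x (axis k 1) = prof' n (trial_scale n ^ 2 * (x \<bullet> x)) * (trial_scale n ^ 2 * (2 * x $ k))"
  by (simp add: trial_amp'_def inner_axis)

lemma continuous_trial_amp:
  "continuous_on UNIV (trial_amp n)" "continuous_on UNIV (\<lambda>x. trial_amp' n x (axis k 1))"
  unfolding trial_amp_def[abs_def] trial_amp'_axis
  by (auto intro!: continuous_intros continuous_on_compose2[OF continuous_prof(1)]
      continuous_on_compose2[OF continuous_prof(2)])

lemma inner_trial_scale: "(trial_scale n *\<^sub>R x) \<bullet> (trial_scale n *\<^sub>R x) = trial_scale n ^ 2 * (x \<bullet> x)"
  by (simp add: power2_eq_square)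

lemma trial_amp_vanish:
  assumes "norm x > 1 / trial_scale n"
  shows "trial_amp n x = 0" and "trial_amp' n x v = 0"
proof -
  have "norm (trial_scale n *\<^sub>R x) > 1" using assms trial_scale_pos[of n] by (simp add: field_simps)
  then have "trial_scale n ^ 2 * (x \<bullet> x) \<ge> 1"
    using inner_self_le_iff[of 1 "trial_scale n *\<^sub>R x"] by (simp only: inner_trial_scale) simp
  then show "trial_amp n x = 0" "trial_amp' n x v = 0"
    by (simp_all add: trial_amp_def trial_amp'_def prof_vanish)
qed

definition trial :: "nat \<Rightarrow> real^3 \<Rightarrow> complex^2" where
  "trial n x = trial_amp n x *\<^sub>R spin_up"

definition trial_grad :: "nat \<Rightarrow> 3 \<Rightarrow> real^3 \<Rightarrow> complex^2" where
  "trial_grad n k x = trial_amp' n x (axis k 1) *\<^sub>R spin_up"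

lemma norm_trial: "norm (trial n x) = \<bar>prof n (trial_scale n ^ 2 * (x \<bullet> x))\<bar>"
  by (simp add: trial_def trial_amp_def)

lemma norm_trial_powers:
  "norm (trial n x) ^ 2 = mass_dens n (trial_scale n *\<^sub>R x)"
  "norm (trial n x) ^ 4 = quart_dens n (trial_scale n *\<^sub>R x)"
  unfolding norm_trial mass_dens_def quart_dens_def inner_trial_scale
  by (simp_all add: power_even_abs)

lemma norm_sigma_grad_trial:
  "norm (sigma_grad (trial_grad n) x) ^ 2
     = 4 * trial_scale n ^ 4 * (prof' n (trial_scale n ^ 2 * (x \<bullet> x)))^2 * (x \<bullet> x)"
proof -
  have "norm (sigma_grad (trial_grad n) x) ^ 2
      = (trial_amp' n x (axis 1 1))^2 + (trial_amp' n x (axis 2 1))^2 + (trial_amp' n x (axis 3 1))^2"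
    unfolding trial_grad_def[abs_def] by (rule norm_sigma_grad_spin_up)
  also have "\<dots> = 4 * trial_scale n ^ 4 * (prof' n (trial_scale n ^ 2 * (x \<bullet> x)))^2
      * ((x $ 1)^2 + (x $ 2)^2 + (x $ 3)^2)"
    unfolding trial_amp'_axis
    by (simp add: power_mult_distrib algebra_simps power2_eq_square power4_eq_xxxx)
  also have "(x $ 1)^2 + (x $ 2)^2 + (x $ 3)^2 = x \<bullet> x"
    by (simp add: inner_vec_def sum_3 power2_eq_square)
  finally show ?thesis .
qed

text \<open>The integrand of the kinetic term is a rescaled copy of the kinetic density; this is
  where the cube in the profile cancels the zero of the denominator \<open>1 - |\<phi>|\<^sup>2\<close>.\<close>

lemma kinetic_integrand_eq:
  "norm (sigma_grad (trial_grad n) x) ^ 2 / (1 - norm (trial n x) ^ 2)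
     = trial_scale n ^ 2 * kin_dens n (trial_scale n *\<^sub>R x)"
proof -
  define t where "t = trial_scale n ^ 2 * (x \<bullet> x)"
  have "norm (sigma_grad (trial_grad n) x) ^ 2 / (1 - norm (trial n x) ^ 2)
      = (trial_scale n ^ 2 * (4 * t)) * ((prof' n t)^2 / (1 - (prof n t)^2))"
    unfolding norm_sigma_grad_trial norm_trial t_def[symmetric]
    by (simp add: t_def power2_eq_square power4_eq_xxxx algebra_simps)
  also have "\<dots> = trial_scale n ^ 2 * kin_dens n (trial_scale n *\<^sub>R x)"
    unfolding prof_ratio_eq kin_dens_def inner_trial_scale t_def by simp
  finally show ?thesis .
qed

lemma integrable_dilation_real3:
  fixes f :: "real^3 \<Rightarrow> real"
  assumes "integrable lborel f"
  shows "integrable lborel (\<lambda>x. f (trial_scale n *\<^sub>R x))"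
  using integrable_affine_iff[of "trial_scale n" f 0] trial_scale_pos[of n] assms by simp

lemma admissible_trial: "admissible (trial n) (trial_grad n)"
  unfolding admissible_def H1_with_grad_def
proof (intro conjI allI)
  have cont: "continuous_on UNIV (trial n)" "continuous_on UNIV (trial_grad n k)" for k
    unfolding trial_def[abs_def] trial_grad_def[abs_def]
    by (auto intro!: continuous_intros continuous_trial_amp)
  show "L2 (trial n)"
    unfolding L2_def norm_trial_powers
    using borel_measurable_continuous_onI[OF cont(1)]
      integrable_dilation_real3[OF densities_integrable(2)] by simp
  show "L2 (trial_grad n k)" for k
    unfolding L2_def
  proof
    show "trial_grad n k \<in> borel_measurable lborel"
      using borel_measurable_continuous_onI[OF cont(2)] by simp
    show "integrable lborel (\<lambda>x. norm (trial_grad n k x) ^ 2)"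
    proof (rule integrable_continuous_compact_support[where R="1 / trial_scale n"])
      show "continuous_on UNIV (\<lambda>x. norm (trial_grad n k x) ^ 2)"
        by (intro continuous_intros cont(2))
    qed (simp add: trial_grad_def trial_amp_vanish)
  qed
  show "weak_partial k (trial n) (trial_grad n k)" for k
    using weak_partial_spin_up[OF trial_amp_deriv continuous_trial_amp(2)]
    unfolding trial_def[abs_def] trial_grad_def[abs_def] by simp
  show "AE x in lborel. norm (trial n x) = 1 \<longrightarrow> sigma_grad (trial_grad n) x = 0"
  proof (intro AE_I2 impI)
    fix x assume "norm (trial n x) = 1"
    then have "prof' n (trial_scale n ^ 2 * (x \<bullet> x)) = 0"
      by (intro prof'_eq_0_if_norm_1) (auto simp: norm_trial)
    then have "norm (sigma_grad (trial_grad n) x) ^ 2 = 0"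
      by (simp add: norm_sigma_grad_trial)
    then show "sigma_grad (trial_grad n) x = 0" by simp
  qed
  show "integrable lborel (\<lambda>x. norm (sigma_grad (trial_grad n) x) ^ 2 / (1 - norm (trial n x) ^ 2))"
    unfolding kinetic_integrand_eq
    using integrable_dilation_real3[OF densities_integrable(1)] by simp
qed

lemma trial_mass: "(\<integral>x. norm (trial n x) ^ 2 \<partial>lborel) = 1"
  using integral_dilation[OF trial_scale_pos, of "mass_dens n" n] trial_scale_cube[of n]
    mass_integral_bounds(1)[of n] vol_half_pos
  by (simp add: norm_trial_powers)

lemma trial_energy_eq:
  "Ffun a (trial n) (trial_grad n)
     = (\<integral>y. kin_dens n y \<partial>lborel) / trial_scale n
       - a / 2 * ((\<integral>y. quart_dens n y \<partial>lborel) / (\<integral>y. mass_dens n y \<partial>lborel))"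
proof -
  have s: "trial_scale n > 0" by (rule trial_scale_pos)
  have "(\<integral>x. norm (sigma_grad (trial_grad n) x) ^ 2 / (1 - norm (trial n x) ^ 2) \<partial>lborel)
      = trial_scale n ^ 2 * ((\<integral>y. kin_dens n y \<partial>lborel) / trial_scale n ^ 3)"
    unfolding kinetic_integrand_eq by (simp add: integral_dilation[OF s])
  also have "\<dots> = (\<integral>y. kin_dens n y \<partial>lborel) / trial_scale n"
    using s by (simp add: power2_eq_square power3_eq_cube)
  moreover have "(\<integral>x. norm (trial n x) ^ 4 \<partial>lborel)
      = (\<integral>y. quart_dens n y \<partial>lborel) / (\<integral>y. mass_dens n y \<partial>lborel)"
    unfolding norm_trial_powers integral_dilation[OF s] by (simp add: trial_scale_cube)
  ultimately show ?thesis
    unfolding Ffun_def by simp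
qed

lemma quartic_growth: "real n / 32^12 \<le> ((32 + real n)/32)^12 / (8 + real n)^6"
proof -
  have "real n \<le> (8 + real n)^6"
    using power_increasing[of 1 6 "8 + real n"] by simp
  also have "\<dots> = (8 + real n)^12 / (8 + real n)^6"
    by (simp add: power_diff[of "8 + real n" 6 12, symmetric])
  also have "\<dots> \<le> (32^12 * ((32 + real n)/32)^12) / (8 + real n)^6"
  proof (intro divide_right_mono)
    have "(8 + real n)^12 \<le> (32 + real n)^12" by (intro power_mono) auto
    then show "(8 + real n)^12 \<le> 32^12 * ((32 + real n)/32)^12"
      by (simp add: power_divide)
  qed simp
  finally show ?thesis by (simp add: field_simps)
qed

lemma trial_energy_bound:
  assumes "a > 0"
  shows "Ffun a (trial n) (trial_grad n)
    \<le> 2304 * vol_unit / root 3 vol_half - a / 2 * (vol_half / vol_unit) * (real n / 32^12)"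
proof -
  have vh: "vol_half > 0" and vu: "vol_unit > 0"
    using vol_half_pos vol_half_le_vol_unit by linarith+
  have s: "trial_scale n > 0" by (rule trial_scale_pos)
  have "(\<integral>y. kin_dens n y \<partial>lborel) / trial_scale n \<le> 2304 * vol_unit / trial_scale n"
    using kin_integral_le[of n] s by (intro divide_right_mono) auto
  also have "\<dots> \<le> 2304 * vol_unit / root 3 vol_half"
    using vu vh s trial_scale_ge[of n] by (intro divide_left_mono) auto
  finally have kin: "(\<integral>y. kin_dens n y \<partial>lborel) / trial_scale n
      \<le> 2304 * vol_unit / root 3 vol_half" .
  have "(vol_half / vol_unit) * (real n / 32^12)
      \<le> (vol_half / vol_unit) * (((32 + real n)/32)^12 / (8 + real n)^6)"
    using quartic_growth[of n] vh vu by (intro mult_left_mono) auto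
  also have "\<dots> = (((32 + real n)/32)^12 * vol_half) / ((8 + real n)^6 * vol_unit)"
    by (simp add: field_simps)
  also have "\<dots> \<le> (\<integral>y. quart_dens n y \<partial>lborel) / (\<integral>y. mass_dens n y \<partial>lborel)"
  proof (rule frac_le)
    have "0 \<le> ((32 + real n)/32)^12 * vol_half" using vh by simp
    then show "0 \<le> (\<integral>y. quart_dens n y \<partial>lborel)"
      using quart_integral_lower[of n] by linarith
  qed (use quart_integral_lower[of n] mass_integral_bounds[of n] vh in auto)
  finally have quart: "(vol_half / vol_unit) * (real n / 32^12)
      \<le> (\<integral>y. quart_dens n y \<partial>lborel) / (\<integral>y. mass_dens n y \<partial>lborel)" .
  show ?thesis
    unfolding trial_energy_eq using kin mult_left_mono[OF quart, of "a / 2"] assms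
    by (simp add: mult.assoc)
qed

lemma filterlim_at_bot_linear_bound:
  fixes f :: "nat \<Rightarrow> real"
  assumes "\<kappa> > 0" and "\<And>n. f n \<le> K - \<kappa> * real n"
  shows "filterlim f at_bot sequentially"
proof -
  have "filterlim (\<lambda>n. - K + \<kappa> * real n) at_top sequentially"
    by (rule filterlim_tendsto_add_at_top[OF tendsto_const
        filterlim_tendsto_pos_mult_at_top[OF tendsto_const assms(1) filterlim_real_sequentially]])
  then have "filterlim (\<lambda>n. - f n) at_top sequentially"
  proof (rule filterlim_at_top_mono)
    show "\<forall>\<^sub>F n in sequentially. - K + \<kappa> * real n \<le> - f n"
      using assms(2) by (intro always_eventually allI) (smt (verit))
  qed
  then show ?thesis by (simp add: filterlim_uminus_at_bot)
qed

lemma trial_energy_tendsto_at_bot: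
  assumes "a > 0"
  shows "filterlim (\<lambda>n. Ffun a (trial n) (trial_grad n)) at_bot sequentially"
proof (rule filterlim_at_bot_linear_bound)
  have "vol_half > 0" "vol_unit > 0"
    using vol_half_pos vol_half_le_vol_unit by linarith+
  then show "a / 2 * (vol_half / vol_unit) / 32^12 > 0" using assms by simp
  show "Ffun a (trial n) (trial_grad n)
      \<le> 2304 * vol_unit / root 3 vol_half - a / 2 * (vol_half / vol_unit) / 32^12 * real n" for n
    using trial_energy_bound[OF assms, of n] by simp
qed

lemma trial_shape:
  "(\<exists>R. \<forall>x. norm x > R \<longrightarrow> trial n x = 0)
   \<and> (\<exists>g :: real \<Rightarrow> real. \<forall>x. trial n x = vector [complex_of_real (g (norm x)), 0])"
proof
  show "\<exists>R. \<forall>x. norm x > R \<longrightarrow> trial n x = 0"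
    using trial_amp_vanish(1)[of n] by (auto simp: trial_def)
  show "\<exists>g :: real \<Rightarrow> real. \<forall>x. trial n x = vector [complex_of_real (g (norm x)), 0]"
    by (rule exI[of _ "\<lambda>r. prof n (trial_scale n ^ 2 * r ^ 2)"])
       (simp add: trial_def trial_amp_def scaleR_spin_up power2_norm_eq_inner)
qed

theorem mainTheorem7:
  fixes a :: real
  assumes "a > 0"
  shows "(\<forall>M. \<exists>\<phi> D. admissible \<phi> D \<and> (\<integral>x. norm (\<phi> x) ^ 2 \<partial>lborel) = 1 \<and> Ffun a \<phi> D < M)
       \<and> (\<exists>(\<phi> :: nat \<Rightarrow> real^3 \<Rightarrow> complex^2) D.
            (\<forall>n. admissible (\<phi> n) (D n)
               \<and> (\<integral>x. norm (\<phi> n x) ^ 2 \<partial>lborel) = 1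
               \<and> (\<exists>R. \<forall>x. norm x > R \<longrightarrow> \<phi> n x = 0)
               \<and> (\<exists>g :: real \<Rightarrow> real. \<forall>x. \<phi> n x = vector [complex_of_real (g (norm x)), 0]))
          \<and> filterlim (\<lambda>n. Ffun a (\<phi> n) (D n)) at_bot sequentially)"
proof -
  have lim: "filterlim (\<lambda>n. Ffun a (trial n) (trial_grad n)) at_bot sequentially"
    by (rule trial_energy_tendsto_at_bot[OF assms])
  have unbounded: "\<exists>\<phi> D. admissible \<phi> D \<and> (\<integral>x. norm (\<phi> x) ^ 2 \<partial>lborel) = 1 \<and> Ffun a \<phi> D < M"
    for M
  proof -
    obtain n where "Ffun a (trial n) (trial_grad n) \<le> M - 1"
      using lim unfolding filterlim_at_bot eventually_sequentially by blast
    then show ?thesis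
      using admissible_trial trial_mass by (intro exI[of _ "trial n"] exI[of _ "trial_grad n"]) auto
  qed
  show ?thesis
    using unbounded lim admissible_trial trial_mass trial_shape by blast
qed

end
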